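(* Let $A\in\mathbb{R}^{n\times m}$ with $n<m$ have nonzero columns $\alpha_1,\dots,\alpha_m$, let $C=A^TA$ with entries $c_{ij}=\langle\alpha_i,\alpha_j\rangle$, and for each $i\in[m]$ define $\nu(i)=\max_{j\neq i}\frac{|c_{ij}|}{c_{ii}}$ and $\rho(i)=\frac{\nu(i)}{\nu(i)+1}$. Let $x\in\mathbb{R}^m$ have support $\mathcal{S}\subseteq[m]$ and put $\rho(\mathcal{S})=\sum_{i\in\mathcal{S}}\rho(i)$. If $\rho(\mathcal{S})<\frac12$, then $x$ is the unique minimizer of $\min_{z\in\mathbb{R}^m}\|z\|_1$ subject to $Az=Ax$ (i.e., every $\ell_1$ minimizer $\hat{x}$ of this problem equals $x$).
   Context: $[m]=\{1,\dots,m\}$. The support of $x$ is the set of indices $i$ with $x_i\neq 0$. The maximum in $\nu(i)$ is over $j\in[m]$, $j\neq i$. *)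

theory Defs
  imports "HOL-Analysis.Analysis"
begin

definition gram :: "real^'m^'n \<Rightarrow> 'm \<Rightarrow> 'm \<Rightarrow> real" where
  "gram A i j = column i A \<bullet> column j A"

definition nu :: "real^'m^'n \<Rightarrow> 'm \<Rightarrow> real" where
  "nu A i = Max {\<bar>gram A i j\<bar> / gram A i i | j. j \<noteq> i}"

definition rho :: "real^'m^'n \<Rightarrow> 'm \<Rightarrow> real" where
  "rho A i = nu A i / (nu A i + 1)"

definition supp :: "real^'m \<Rightarrow> 'm set" where
  "supp x = {i. x $ i \<noteq> 0}"

definition l1norm :: "real^'m \<Rightarrow> real" where
  "l1norm z = (\<Sum>i\<in>UNIV. \<bar>z $ i\<bar>)"

end

theory Submission
  imports Defs
begin

(* For h in the null space of A, row i of C h = A^T A h = 0 reads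
   c_ii h_i = - sum_{j ~= i} c_ij h_j, so |h_i| <= nu(i) (|h|_1 - |h_i|), i.e. |h_i| <= rho(i) |h|_1.
   Summing over the support S of x shows that every nonzero null vector puts less than half
   of its l1 mass on S (the null space property); hence moving from x to any x + h with
   A h = 0, h ~= 0 strictly increases the l1 norm. *)

lemma gram_self_pos:
  fixes A :: "real^'m^'n"
  assumes "column i A \<noteq> 0"
  shows "gram A i i > 0"
  using assms by (simp add: gram_def)

lemma abs_gram_div_le_nu:
  fixes A :: "real^'m^'n"
  assumes "j \<noteq> i"
  shows "\<bar>gram A i j\<bar> / gram A i i \<le> nu A i"
proof -
  have "{\<bar>gram A i j\<bar> / gram A i i | j. j \<noteq> i} = (\<lambda>j. \<bar>gram A i j\<bar> / gram A i i) ` {j. j \<noteq> i}"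
    by auto
  then have "finite {\<bar>gram A i j\<bar> / gram A i i | j. j \<noteq> i}" by simp
  then show ?thesis unfolding nu_def
    by (rule Max_ge) (use assms in blast)
qed

lemma gram_mult_null_vector:
  fixes A :: "real^'m^'n"
  assumes "A *v h = 0"
  shows "(\<Sum>j\<in>UNIV. gram A i j * h $ j) = 0"
proof -
  have "(\<Sum>j\<in>UNIV. gram A i j * h $ j) = (\<Sum>j\<in>UNIV. \<Sum>k\<in>UNIV. A$k$i * A$k$j * h $ j)"
    by (simp add: gram_def inner_vec_def column_def sum_distrib_right)
  also have "\<dots> = (\<Sum>k\<in>UNIV. A$k$i * (A *v h)$k)"
    by (subst sum.swap) (simp add: matrix_vector_mult_def sum_distrib_left mult.assoc)
  also have "\<dots> = 0" using assms by simp
  finally show ?thesis .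
qed

lemma l1norm_remove:
  "l1norm h = \<bar>h $ i\<bar> + (\<Sum>j\<in>UNIV-{i}. \<bar>h $ j\<bar>)"
  unfolding l1norm_def by (simp add: sum.remove[of UNIV i])

lemma l1norm_pos:
  assumes "h \<noteq> 0"
  shows "l1norm h > 0"
proof -
  obtain k where "h $ k \<noteq> 0" using assms by (metis vec_eq_iff zero_index)
  then show ?thesis unfolding l1norm_def by (intro sum_pos2[of UNIV k]) auto
qed

lemma abs_null_vector_coord_le_rho:
  fixes A :: "real^'m^'n"
  assumes col: "column i A \<noteq> 0" and other: "j0 \<noteq> i" and null: "A *v h = 0"
  shows "\<bar>h $ i\<bar> \<le> rho A i * l1norm h"
proof -
  let ?g = "gram A i i" and ?off = "\<Sum>j\<in>UNIV-{i}. gram A i j * h $ j"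
  have gp: "?g > 0" using gram_self_pos[OF col] .
  have nu_nonneg: "nu A i \<ge> 0"
    using abs_gram_div_le_nu[OF other, of A] gp by (smt (verit) divide_nonneg_pos abs_ge_zero)
  have "?g * h$i + ?off = 0"
    using gram_mult_null_vector[OF null, of i] by (simp add: sum.remove[of UNIV i])
  then have "\<bar>?g * h$i\<bar> = \<bar>?off\<bar>"
    by (metis abs_minus_cancel add_eq_0_iff)
  then have "?g * \<bar>h$i\<bar> = \<bar>?off\<bar>"
    using gp by (simp add: abs_mult)
  also have "\<dots> \<le> (\<Sum>j\<in>UNIV-{i}. \<bar>gram A i j\<bar> * \<bar>h $ j\<bar>)"
    by (rule order_trans[OF sum_abs]) (simp add: abs_mult)
  also have "\<dots> \<le> (\<Sum>j\<in>UNIV-{i}. (nu A i * ?g) * \<bar>h $ j\<bar>)"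
  proof (rule sum_mono)
    fix j assume "j \<in> UNIV - {i}"
    then have "\<bar>gram A i j\<bar> \<le> nu A i * ?g"
      using abs_gram_div_le_nu[of j i A] gp by (simp add: divide_le_eq)
    then show "\<bar>gram A i j\<bar> * \<bar>h $ j\<bar> \<le> (nu A i * ?g) * \<bar>h $ j\<bar>"
      by (simp add: mult_right_mono)
  qed
  also have "\<dots> = ?g * (nu A i * (l1norm h - \<bar>h$i\<bar>))"
    by (simp add: sum_distrib_left l1norm_remove[of h i] algebra_simps)
  finally have "\<bar>h$i\<bar> \<le> nu A i * (l1norm h - \<bar>h$i\<bar>)" using gp by simp
  then have "\<bar>h$i\<bar> * (nu A i + 1) \<le> nu A i * l1norm h" by (simp add: algebra_simps)
  then show ?thesis using nu_nonneg unfolding rho_def by (simp add: le_divide_eq mult.commute)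
qed

lemma exists_other_index:
  fixes i :: "'m::finite"
  assumes "CARD('n::finite) < CARD('m)"
  obtains j where "j \<noteq> i"
proof -
  have "UNIV \<noteq> {i}"
  proof
    assume "UNIV = {i}"
    then have "CARD('m) = card {i}" by (rule arg_cong)
    then have "CARD('m) = 1" by simp
    moreover have "0 < CARD('n)" by (simp add: finite_UNIV_card_ge_0)
    ultimately show False using assms by linarith
  qed
  then show ?thesis using that by blast
qed

lemma null_space_property:
  fixes A :: "real^'m^'n"
  assumes "CARD('n) < CARD('m)" and "\<And>j. column j A \<noteq> 0"
    and "(\<Sum>i\<in>S. rho A i) < 1/2"
    and "A *v h = 0" and "h \<noteq> 0"
  shows "(\<Sum>i\<in>S. \<bar>h$i\<bar>) < l1norm h / 2"
proof -
  have "\<bar>h$i\<bar> \<le> rho A i * l1norm h" for i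
    by (rule exists_other_index[OF assms(1), of i])
       (rule abs_null_vector_coord_le_rho[OF assms(2) _ assms(4)])
  then have "(\<Sum>i\<in>S. \<bar>h$i\<bar>) \<le> (\<Sum>i\<in>S. rho A i) * l1norm h"
    unfolding sum_distrib_right by (rule sum_mono)
  also have "\<dots> < l1norm h / 2" using assms(3) l1norm_pos[OF assms(5)] by simp
  finally show ?thesis .
qed

lemma l1norm_split:
  "l1norm h = (\<Sum>i\<in>S. \<bar>h$i\<bar>) + (\<Sum>i\<in>UNIV-S. \<bar>h$i\<bar>)"
  unfolding l1norm_def by (simp add: sum.subset_diff[of S UNIV])

lemma l1norm_less_add:
  assumes "(\<Sum>i\<in>supp x. \<bar>h$i\<bar>) < l1norm h / 2"
  shows "l1norm x < l1norm (x + h)"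
proof -
  let ?S = "supp x"
  have outside: "x $ i = 0" if "i \<notin> ?S" for i using that by (simp add: supp_def)
  have "l1norm x = (\<Sum>i\<in>?S. \<bar>x$i\<bar>)"
    using l1norm_split[of x ?S] by (simp add: outside)
  also have "\<dots> \<le> (\<Sum>i\<in>?S. \<bar>(x + h)$i\<bar>) + (\<Sum>i\<in>?S. \<bar>h$i\<bar>)"
  proof -
    have "\<bar>x$i\<bar> \<le> \<bar>(x + h)$i\<bar> + \<bar>h$i\<bar>" for i by simp
    then show ?thesis by (simp add: sum_mono flip: sum.distrib)
  qed
  also have "\<dots> < (\<Sum>i\<in>?S. \<bar>(x + h)$i\<bar>) + (\<Sum>i\<in>UNIV-?S. \<bar>h$i\<bar>)"
    using assms l1norm_split[of h ?S] by linarith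
  also have "\<dots> = l1norm (x + h)"
    using l1norm_split[of "x + h" ?S] by (simp add: outside)
  finally show ?thesis .
qed

theorem theorem1:
  fixes A :: "real^'m^'n" and x :: "real^'m"
  assumes "CARD('n) < CARD('m)"
    and "\<And>j. column j A \<noteq> 0"
    and "(\<Sum>i\<in>supp x. rho A i) < 1/2"
  shows "(\<forall>z. A *v z = A *v x \<longrightarrow> l1norm x \<le> l1norm z)
    \<and> (\<forall>xh. (A *v xh = A *v x \<and> (\<forall>z. A *v z = A *v x \<longrightarrow> l1norm xh \<le> l1norm z))
            \<longrightarrow> xh = x)"
proof -
  have strict: "l1norm x < l1norm z" if "A *v z = A *v x" and "z \<noteq> x" for z
  proof -
    have "A *v (z - x) = 0" and "z - x \<noteq> 0"
      using that by (simp_all add: matrix_vector_mult_diff_distrib)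
    then have "l1norm x < l1norm (x + (z - x))"
      by (intro l1norm_less_add null_space_property[OF assms])
    then show ?thesis by simp
  qed
  then show ?thesis by (metis order.refl order.strict_implies_order not_le)
qed

end
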